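(* Let $(\mathcal{E},\mathcal{L},\mathcal{B})$ be a weakly left resolving labelled space whose accommodating family $\mathcal{B}$ is closed under relative complements, let $S$ be its associated inverse semigroup, and let $\xi$ be a tight filter in $E(S)$ with word $\alpha$. Then for every $0<n\le|\alpha|$ ($n$ finite), $\xi_n$ is an ultrafilter in $\mathcal{B}_{\alpha_{1,n}}$, and $\xi_0$ is either empty or an ultrafilter in $\mathcal{B}$.
   Context: A directed graph $\mathcal{E}=(\mathcal{E}^0,\mathcal{E}^1,r,s)$ has countable nonempty vertex set, edge set, range/source maps; paths satisfy $r(\lambda_i)=s(\lambda_{i+1})$. A labelled graph has a surjective labelling $\mathcal{L}:\mathcal{E}^1\to\mathcal{A}$ extended letterwise to finite and infinite paths. $\omega$ is the empty word, $\mathcal{L}^+=\bigcup_{n\ge1}\mathcal{L}(\mathcal{E}^n)$, $\mathcal{L}^*=\{\omega\}\cup\mathcal{L}^+$, $\mathcal{L}^\infty$ the labels of infinite paths; $\alpha_{i,j}=\alpha_i\cdots\alpha_j$, $\alpha_{1,0}=\omega$. For $A\subseteq\mathcal{E}^0$, $\alpha\in\mathcal{L}^+$: $r(A,\alpha)=\{r(\lambda):\mathcal{L}(\lambda)=\alpha,\ s(\lambda)\in A\}$, $r(A,\omega)=A$, $r(\alpha)=r(\mathcal{E}^0,\alpha)$. $\mathcal{B}$ accommodating: closed under $r(\cdot,\alpha)$, finite intersections and unions, contains $r(\alpha)$ for $\alpha\in\mathcal{L}^+$; labelled space weakly left resolving if $r(A\cap B,\alpha)=r(A,\alpha)\cap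 r(B,\alpha)$ for $A,B\in\mathcal{B}$, $\alpha\in\mathcal{L}^+$. $\mathcal{B}_\alpha=\mathcal{B}\cap\mathcal{P}(r(\alpha))$, $\mathcal{B}_\omega=\mathcal{B}$. $S$ = triples $(\alpha,A,\beta)$, $\alpha,\beta\in\mathcal{L}^*$, $\emptyset\ne A\in\mathcal{B}_\alpha\cap\mathcal{B}_\beta$, plus $0$; product $(\alpha,A,\beta)(\gamma,B,\delta)=(\alpha\gamma',r(A,\gamma')\cap B,\delta)$ if $\gamma=\beta\gamma'$, $=(\alpha,A\cap r(B,\beta'),\delta\beta')$ if $\beta=\gamma\beta'$, $=0$ otherwise (empty middle entry identified with $0$). $E(S)=\{(\alpha,A,\alpha)\}\cup\{0\}$, $p\le q$ iff $pq=p$. A filter in a poset with least element $0$ is a nonempty upward-closed subset not containing $0$ in which any two elements have a common lower bound in it; an ultrafilter is a maximal filter; filters in $\mathcal{B}_\alpha$ are under inclusion. The word of a filter $\xi$ in $E(S)$ is the longest word among its elements if it exists, and otherwise the unique $\alpha\in\mathcal{L}^\infty$ such that all elements of $\xi$ are of the form $(\alpha_{1,n},A,\alpha_{1,n})$; $\xi_n=\{A\in\mathcal{B}:(\alpha_{1,n},A,\alpha_{1,n})\in\xi\}$. For $x\in E(S)$, a set $Z\subseteq\{y\in E(S):y\le x\}$ is a cover for $x$ if for every nonzero $y\le x$ there is $z\in Z$ with $zy\neq0$. A filter $\xi$ in $E(S)$ is tight if for every $x\in\xi$ and every finite cover $Z$ of $x$ one has $Z\cap\xi\neq\emptyset$.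 *)

theory Defs
  imports "HOL-Library.Countable_Set" "HOL-Library.Extended_Nat"
begin

text \<open>Directed graph: vertex set = UNIV :: 'v set, edge set = UNIV :: 'e set,
  range map rg and source map sc. Labelling lab :: 'e => 'a; the alphabet is
  range lab, so the labelling is surjective by construction.\<close>

definition is_path :: "('e \<Rightarrow> 'v) \<Rightarrow> ('e \<Rightarrow> 'v) \<Rightarrow> 'e list \<Rightarrow> bool" where
  "is_path rg sc es \<longleftrightarrow> es \<noteq> [] \<and> (\<forall>i. Suc i < length es \<longrightarrow> rg (es ! i) = sc (es ! Suc i))"

definition Lplus :: "('e \<Rightarrow> 'v) \<Rightarrow> ('e \<Rightarrow> 'v) \<Rightarrow> ('e \<Rightarrow> 'a) \<Rightarrow> 'a list set" where
  "Lplus rg sc lab = {map lab es | es. is_path rg sc es}"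

definition Lstar :: "('e \<Rightarrow> 'v) \<Rightarrow> ('e \<Rightarrow> 'v) \<Rightarrow> ('e \<Rightarrow> 'a) \<Rightarrow> 'a list set" where
  "Lstar rg sc lab = insert [] (Lplus rg sc lab)"

definition Linf :: "('e \<Rightarrow> 'v) \<Rightarrow> ('e \<Rightarrow> 'v) \<Rightarrow> ('e \<Rightarrow> 'a) \<Rightarrow> (nat \<Rightarrow> 'a) set" where
  "Linf rg sc lab = {lab \<circ> p | p. \<forall>i. rg (p i) = sc (p (Suc i))}"

definition rel_range :: "('e \<Rightarrow> 'v) \<Rightarrow> ('e \<Rightarrow> 'v) \<Rightarrow> ('e \<Rightarrow> 'a) \<Rightarrow> 'v set \<Rightarrow> 'a list \<Rightarrow> 'v set" where
  "rel_range rg sc lab A \<alpha> =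
     (if \<alpha> = [] then A
      else {rg (last es) | es. is_path rg sc es \<and> map lab es = \<alpha> \<and> sc (hd es) \<in> A})"

definition accommodating :: "('e \<Rightarrow> 'v) \<Rightarrow> ('e \<Rightarrow> 'v) \<Rightarrow> ('e \<Rightarrow> 'a) \<Rightarrow> 'v set set \<Rightarrow> bool" where
  "accommodating rg sc lab B \<longleftrightarrow>
     (\<forall>A\<in>B. \<forall>\<alpha>\<in>Lplus rg sc lab. rel_range rg sc lab A \<alpha> \<in> B) \<and>
     (\<forall>A\<in>B. \<forall>C\<in>B. A \<inter> C \<in> B \<and> A \<union> C \<in> B) \<and>
     (\<forall>\<alpha>\<in>Lplus rg sc lab. rel_range rg sc lab UNIV \<alpha> \<in> B)"

definition weakly_left_resolving :: "('e \<Rightarrow> 'v) \<Rightarrow> ('e \<Rightarrow> 'v) \<Rightarrow> ('e \<Rightarrow> 'a) \<Rightarrow> 'v set set \<Rightarrow> bool" where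
  "weakly_left_resolving rg sc lab B \<longleftrightarrow>
     (\<forall>A\<in>B. \<forall>C\<in>B. \<forall>\<alpha>\<in>Lplus rg sc lab.
        rel_range rg sc lab (A \<inter> C) \<alpha> = rel_range rg sc lab A \<alpha> \<inter> rel_range rg sc lab C \<alpha>)"

definition closed_rel_compl :: "'v set set \<Rightarrow> bool" where
  "closed_rel_compl B \<longleftrightarrow> (\<forall>A\<in>B. \<forall>C\<in>B. A - C \<in> B)"

definition Bsub :: "('e \<Rightarrow> 'v) \<Rightarrow> ('e \<Rightarrow> 'v) \<Rightarrow> ('e \<Rightarrow> 'a) \<Rightarrow> 'v set set \<Rightarrow> 'a list \<Rightarrow> 'v set set" where
  "Bsub rg sc lab B \<alpha> = (if \<alpha> = [] then B else {A \<in> B. A \<subseteq> rel_range rg sc lab UNIV \<alpha>})"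

text \<open>Inverse semigroup S: None is 0, Some (alpha, A, beta) the triple.\<close>
type_synonym ('a, 'v) selem = "('a list \<times> 'v set \<times> 'a list) option"

definition S_set :: "('e \<Rightarrow> 'v) \<Rightarrow> ('e \<Rightarrow> 'v) \<Rightarrow> ('e \<Rightarrow> 'a) \<Rightarrow> 'v set set \<Rightarrow> ('a, 'v) selem set" where
  "S_set rg sc lab B = insert None
     {Some (\<alpha>, A, \<beta>) | \<alpha> A \<beta>. \<alpha> \<in> Lstar rg sc lab \<and> \<beta> \<in> Lstar rg sc lab \<and> A \<noteq> {} \<and>
        A \<in> Bsub rg sc lab B \<alpha> \<inter> Bsub rg sc lab B \<beta>}"

definition mk_triple :: "'a list \<Rightarrow> 'v set \<Rightarrow> 'a list \<Rightarrow> ('a, 'v) selem" where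
  "mk_triple \<alpha> A \<beta> = (if A = {} then None else Some (\<alpha>, A, \<beta>))"

fun smult :: "('e \<Rightarrow> 'v) \<Rightarrow> ('e \<Rightarrow> 'v) \<Rightarrow> ('e \<Rightarrow> 'a) \<Rightarrow> ('a, 'v) selem \<Rightarrow> ('a, 'v) selem \<Rightarrow> ('a, 'v) selem" where
  "smult rg sc lab (Some (\<alpha>, A, \<beta>)) (Some (\<gamma>, C, \<delta>)) =
     (if (\<exists>\<gamma>'. \<gamma> = \<beta> @ \<gamma>') then
        (let \<gamma>' = drop (length \<beta>) \<gamma> in mk_triple (\<alpha> @ \<gamma>') (rel_range rg sc lab A \<gamma>' \<inter> C) \<delta>)
      else if (\<exists>\<beta>'. \<beta> = \<gamma> @ \<beta>') then
        (let \<beta>' = drop (length \<gamma>) \<beta> in mk_triple \<alpha> (A \<inter> rel_range rg sc lab C \<beta>') (\<delta> @ \<beta>'))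
      else None)"
| "smult rg sc lab _ _ = None"

definition ES :: "('e \<Rightarrow> 'v) \<Rightarrow> ('e \<Rightarrow> 'v) \<Rightarrow> ('e \<Rightarrow> 'a) \<Rightarrow> 'v set set \<Rightarrow> ('a, 'v) selem set" where
  "ES rg sc lab B = insert None
     {Some (\<alpha>, A, \<alpha>) | \<alpha> A. \<alpha> \<in> Lstar rg sc lab \<and> A \<noteq> {} \<and> A \<in> Bsub rg sc lab B \<alpha>}"

definition sle :: "('e \<Rightarrow> 'v) \<Rightarrow> ('e \<Rightarrow> 'v) \<Rightarrow> ('e \<Rightarrow> 'a) \<Rightarrow> ('a, 'v) selem \<Rightarrow> ('a, 'v) selem \<Rightarrow> bool" where
  "sle rg sc lab p q \<longleftrightarrow> smult rg sc lab p q = p"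

definition is_filter :: "'b set \<Rightarrow> ('b \<Rightarrow> 'b \<Rightarrow> bool) \<Rightarrow> 'b \<Rightarrow> 'b set \<Rightarrow> bool" where
  "is_filter P le z0 F \<longleftrightarrow> F \<subseteq> P \<and> F \<noteq> {} \<and> z0 \<notin> F \<and>
     (\<forall>x\<in>F. \<forall>y\<in>P. le x y \<longrightarrow> y \<in> F) \<and>
     (\<forall>x\<in>F. \<forall>y\<in>F. \<exists>z\<in>F. le z x \<and> le z y)"

definition is_ultrafilter :: "'b set \<Rightarrow> ('b \<Rightarrow> 'b \<Rightarrow> bool) \<Rightarrow> 'b \<Rightarrow> 'b set \<Rightarrow> bool" where
  "is_ultrafilter P le z0 F \<longleftrightarrow> is_filter P le z0 F \<and>
     (\<forall>G. is_filter P le z0 G \<and> F \<subseteq> G \<longrightarrow> G = F)"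

definition is_cover :: "('e \<Rightarrow> 'v) \<Rightarrow> ('e \<Rightarrow> 'v) \<Rightarrow> ('e \<Rightarrow> 'a) \<Rightarrow> 'v set set \<Rightarrow> ('a, 'v) selem \<Rightarrow> ('a, 'v) selem set \<Rightarrow> bool" where
  "is_cover rg sc lab B x Z \<longleftrightarrow> Z \<subseteq> {y \<in> ES rg sc lab B. sle rg sc lab y x} \<and>
     (\<forall>y\<in>ES rg sc lab B. y \<noteq> None \<and> sle rg sc lab y x \<longrightarrow> (\<exists>z\<in>Z. smult rg sc lab z y \<noteq> None))"

definition is_tight_filter :: "('e \<Rightarrow> 'v) \<Rightarrow> ('e \<Rightarrow> 'v) \<Rightarrow> ('e \<Rightarrow> 'a) \<Rightarrow> 'v set set \<Rightarrow> ('a, 'v) selem set \<Rightarrow> bool" where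
  "is_tight_filter rg sc lab B \<xi> \<longleftrightarrow> is_filter (ES rg sc lab B) (sle rg sc lab) None \<xi> \<and>
     (\<forall>x\<in>\<xi>. \<forall>Z. finite Z \<and> is_cover rg sc lab B x Z \<longrightarrow> Z \<inter> \<xi> \<noteq> {})"

datatype 'a word = FinW "'a list" | InfW "nat \<Rightarrow> 'a"

fun wlen :: "'a word \<Rightarrow> enat" where
  "wlen (FinW \<beta>) = enat (length \<beta>)"
| "wlen (InfW \<alpha>) = \<infinity>"

fun wpref :: "'a word \<Rightarrow> nat \<Rightarrow> 'a list" where
  "wpref (FinW \<beta>) n = take n \<beta>"
| "wpref (InfW \<alpha>) n = map \<alpha> [0..<n]"

definition has_longest_word :: "('a, 'v) selem set \<Rightarrow> 'a list \<Rightarrow> bool" where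
  "has_longest_word \<xi> \<beta> \<longleftrightarrow> (\<exists>A. Some (\<beta>, A, \<beta>) \<in> \<xi>) \<and>
     (\<forall>\<gamma> A \<delta>. Some (\<gamma>, A, \<delta>) \<in> \<xi> \<longrightarrow> length \<gamma> \<le> length \<beta>)"

definition word_of :: "('e \<Rightarrow> 'v) \<Rightarrow> ('e \<Rightarrow> 'v) \<Rightarrow> ('e \<Rightarrow> 'a) \<Rightarrow> ('a, 'v) selem set \<Rightarrow> 'a word \<Rightarrow> bool" where
  "word_of rg sc lab \<xi> w \<longleftrightarrow>
     (case w of
        FinW \<beta> \<Rightarrow> has_longest_word \<xi> \<beta>
      | InfW \<alpha> \<Rightarrow> (\<nexists>\<beta>. has_longest_word \<xi> \<beta>) \<and> \<alpha> \<in> Linf rg sc lab \<and>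
           (\<forall>x\<in>\<xi>. \<exists>n A. x = Some (map \<alpha> [0..<n], A, map \<alpha> [0..<n])))"

definition xi_n :: "'v set set \<Rightarrow> ('a, 'v) selem set \<Rightarrow> 'a word \<Rightarrow> nat \<Rightarrow> 'v set set" where
  "xi_n B \<xi> w n = {A \<in> B. Some (wpref w n, A, wpref w n) \<in> \<xi>}"

end

theory Submission
  imports Defs
begin

text \<open>
  For a word p let \<xi>_p = {A. (p, A, p) \<in> \<xi>}. The idempotent (p, A, p) dominates (p, A', p)
  exactly when A' \<subseteq> A, so \<xi>_p is upward closed in B_p; meets exist because a common lower
  bound (p q, D, p q) of (p, A, p) and (p, A', p) lies below (p, A \<inter> A', p) by weak left
  resolvingness.
  For maximality, let G be a larger filter, C \<in> G and (p, A, p) \<in> \<xi>. The two idempotents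
  (p, A \<inter> C, p) and (p, A - C, p) cover (p, A, p), since r(A, q) = r(A \<inter> C, q) \<union> r(A - C, q).
  By tightness one of them lies in \<xi>; it cannot be the second one, because A - C and C are
  disjoint members of G. Hence A \<inter> C and with it C belong to \<xi>_p.
  Finally, for 0 < n \<le> |\<alpha>| the filter \<xi> contains some (\<alpha>_{1,n} q, A, \<alpha>_{1,n} q), which lies below
  (\<alpha>_{1,n}, r(\<alpha>_{1,n}), \<alpha>_{1,n}); so \<xi>_n = \<xi>_{\<alpha>_{1,n}} is nonempty.
\<close>

definition filter_slice :: "'v set set \<Rightarrow> ('a, 'v) selem set \<Rightarrow> 'a list \<Rightarrow> 'v set set" where
  "filter_slice B \<xi> p = {A \<in> B. Some (p, A, p) \<in> \<xi>}"

lemma xi_n_eq_filter_slice: "xi_n B \<xi> w n = filter_slice B \<xi> (wpref w n)"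
  by (simp add: xi_n_def filter_slice_def)

lemma is_filterD:
  assumes "is_filter P le z0 F"
  shows "F \<subseteq> P" "z0 \<notin> F"
    and "\<And>x y. x \<in> F \<Longrightarrow> y \<in> P \<Longrightarrow> le x y \<Longrightarrow> y \<in> F"
    and "\<And>x y. x \<in> F \<Longrightarrow> y \<in> F \<Longrightarrow> \<exists>z\<in>F. le z x \<and> le z y"
  using assms by (auto simp: is_filter_def)

lemma is_path_take_drop:
  assumes "is_path rg sc es" "0 < k" "k < length es"
  shows "is_path rg sc (take k es)" "is_path rg sc (drop k es)"
    and "rg (last (take k es)) = sc (hd (drop k es))"
proof -
  have step: "\<And>i. Suc i < length es \<Longrightarrow> rg (es ! i) = sc (es ! Suc i)"
    using assms(1) by (simp add: is_path_def)
  show "is_path rg sc (take k es)" "is_path rg sc (drop k es)"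
    unfolding is_path_def using assms(2,3) step by auto
  have "last (take k es) = es ! (k - 1)"
    using assms(2,3) by (subst last_conv_nth) auto
  moreover have "hd (drop k es) = es ! k"
    using assms(3) by (simp add: hd_drop_conv_nth)
  ultimately show "rg (last (take k es)) = sc (hd (drop k es))"
    using step[of "k - 1"] assms(2,3) by simp
qed

lemma rel_range_Nil [simp]: "rel_range rg sc lab A [] = A"
  by (simp add: rel_range_def)

lemma rel_range_empty [simp]: "rel_range rg sc lab {} q = {}"
  by (simp add: rel_range_def)

lemma rel_range_Un:
  "rel_range rg sc lab (A \<union> C) q = rel_range rg sc lab A q \<union> rel_range rg sc lab C q"
  by (auto simp: rel_range_def)

lemma rel_range_nonempty_imp_Lplus:
  "rel_range rg sc lab A q \<noteq> {} \<Longrightarrow> q \<noteq> [] \<Longrightarrow> q \<in> Lplus rg sc lab"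
  by (auto simp: rel_range_def Lplus_def split: if_splits)

lemma rel_range_append_subset:
  assumes "p \<noteq> []"
  shows "rel_range rg sc lab X (p @ q) \<subseteq> rel_range rg sc lab (rel_range rg sc lab X p) q"
proof (cases "q = []")
  case False
  show ?thesis
  proof
    fix v assume "v \<in> rel_range rg sc lab X (p @ q)"
    then obtain es where es: "is_path rg sc es" "map lab es = p @ q" "sc (hd es) \<in> X"
      and v: "v = rg (last es)"
      using assms by (auto simp: rel_range_def)
    define k where "k = length p"
    have k: "0 < k" "k < length es"
      using assms False arg_cong[OF es(2), of length] by (auto simp: k_def)
    note split = is_path_take_drop[OF es(1) k]
    have labels: "map lab (take k es) = p" "map lab (drop k es) = q"
      using es(2) by (simp_all add: k_def take_map[symmetric] drop_map[symmetric])
    have "rg (last (take k es)) \<in> rel_range rg sc lab X p"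
      unfolding rel_range_def using assms split(1) labels(1) es(3) k(1)
      by (auto simp: hd_take intro!: exI[of _ "take k es"])
    moreover have "v = rg (last (drop k es))"
      using v k by (simp add: last_drop)
    ultimately show "v \<in> rel_range rg sc lab (rel_range rg sc lab X p) q"
      unfolding rel_range_def using False split(2,3) labels(2) by auto
  qed
qed simp

lemma Lplus_prefix:
  assumes "p @ q \<in> Lplus rg sc lab" "p \<noteq> []"
  shows "p \<in> Lplus rg sc lab"
proof (cases "q = []")
  case False
  from assms(1) obtain es where es: "is_path rg sc es" "map lab es = p @ q"
    by (auto simp: Lplus_def)
  have k: "0 < length p" "length p < length es"
    using assms(2) False arg_cong[OF es(2), of length] by auto
  have "is_path rg sc (take (length p) es)" "map lab (take (length p) es) = p"
    using is_path_take_drop(1)[OF es(1) k] es(2) by (simp_all add: take_map[symmetric])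
  then show ?thesis
    unfolding Lplus_def by (intro CollectI exI[of _ "take (length p) es"]) simp
qed (use assms in simp)

lemma Bsub_imp_B: "A \<in> Bsub rg sc lab B p \<Longrightarrow> A \<in> B"
  by (auto simp: Bsub_def split: if_splits)

lemma Bsub_downward_closed:
  "A \<in> Bsub rg sc lab B p \<Longrightarrow> C \<in> B \<Longrightarrow> C \<subseteq> A \<Longrightarrow> C \<in> Bsub rg sc lab B p"
  by (auto simp: Bsub_def split: if_splits)

lemma Some_in_ES_iff:
  "Some (a, E, b) \<in> ES rg sc lab B \<longleftrightarrow>
     a = b \<and> a \<in> Lstar rg sc lab \<and> E \<noteq> {} \<and> E \<in> Bsub rg sc lab B a"
  by (auto simp: ES_def)

lemma ES_cases: "x \<in> ES rg sc lab B \<Longrightarrow> x = None \<or> (\<exists>a E. x = Some (a, E, a))"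
  by (auto simp: ES_def)

lemma sle_Some_iff:
  "sle rg sc lab (Some (a, E, a)) (Some (b, D, b)) \<longleftrightarrow>
     (\<exists>q. a = b @ q \<and> E \<noteq> {} \<and> E \<subseteq> rel_range rg sc lab D q)"
proof
  assume le: "sle rg sc lab (Some (a, E, a)) (Some (b, D, b))"
  consider g where "b = a @ g" | q where "a = b @ q" "\<nexists>g. b = a @ g"
    | "\<nexists>g. b = a @ g" "\<nexists>q. a = b @ q"
    by blast
  then show "\<exists>q. a = b @ q \<and> E \<noteq> {} \<and> E \<subseteq> rel_range rg sc lab D q"
  proof cases
    case (1 g)
    with le have "mk_triple b (rel_range rg sc lab E g \<inter> D) b = Some (a, E, a)"
      by (auto simp: sle_def Let_def)
    then have "g = []" "E \<subseteq> D" "E \<noteq> {}"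
      using 1 by (auto simp: mk_triple_def split: if_splits)
    then show ?thesis using 1 by auto
  next
    case (2 q)
    with le have "mk_triple a (E \<inter> rel_range rg sc lab D q) (b @ q) = Some (a, E, a)"
      by (auto simp: sle_def Let_def)
    then show ?thesis using 2 by (auto simp: mk_triple_def split: if_splits)
  next
    case 3
    with le show ?thesis by (simp add: sle_def)
  qed
next
  assume "\<exists>q. a = b @ q \<and> E \<noteq> {} \<and> E \<subseteq> rel_range rg sc lab D q"
  then obtain q where q: "a = b @ q" "E \<noteq> {}" "E \<subseteq> rel_range rg sc lab D q" by blast
  show "sle rg sc lab (Some (a, E, a)) (Some (b, D, b))"
  proof (cases "q = []")
    case True
    then show ?thesis using q by (auto simp: sle_def mk_triple_def Int_absorb2)
  next
    case False
    then have "\<nexists>g. b = a @ g" using q(1) by auto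
    then show ?thesis using q by (auto simp: sle_def mk_triple_def Let_def Int_absorb1)
  qed
qed

lemma smult_Some_append_nonzero:
  "d \<in> rel_range rg sc lab A q \<Longrightarrow> d \<in> D \<Longrightarrow>
     smult rg sc lab (Some (p, A, p)) (Some (p @ q, D, p @ q)) \<noteq> None"
  by (auto simp: mk_triple_def Let_def)

lemma mk_triple_below:
  assumes "X \<in> B" "X \<subseteq> A" "A \<in> Bsub rg sc lab B p" "p \<in> Lstar rg sc lab"
  shows "mk_triple p X p \<in> ES rg sc lab B \<and> sle rg sc lab (mk_triple p X p) (Some (p, A, p))"
proof (cases "X = {}")
  case True
  then show ?thesis by (simp add: mk_triple_def ES_def sle_def)
next
  case False
  have "X \<in> Bsub rg sc lab B p" by (rule Bsub_downward_closed[OF assms(3,1,2)])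
  moreover have "sle rg sc lab (Some (p, X, p)) (Some (p, A, p))"
    using False assms(2) by (auto simp: sle_Some_iff)
  ultimately show ?thesis using False assms(4) by (simp add: mk_triple_def Some_in_ES_iff)
qed

lemma is_cover_split:
  assumes "X \<union> Y = A" "X \<in> B" "Y \<in> B" "A \<in> Bsub rg sc lab B p" "p \<in> Lstar rg sc lab"
  shows "is_cover rg sc lab B (Some (p, A, p)) {mk_triple p X p, mk_triple p Y p}"
  unfolding is_cover_def
proof (intro conjI ballI impI)
  have "X \<subseteq> A" "Y \<subseteq> A" using assms(1) by auto
  then show "{mk_triple p X p, mk_triple p Y p} \<subseteq> {y \<in> ES rg sc lab B. sle rg sc lab y (Some (p, A, p))}"
    using mk_triple_below[OF assms(2) _ assms(4,5)] mk_triple_below[OF assms(3) _ assms(4,5)]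
    by simp
  fix y assume y: "y \<in> ES rg sc lab B" "y \<noteq> None \<and> sle rg sc lab y (Some (p, A, p))"
  then obtain a D where yD: "y = Some (a, D, a)" using ES_cases by blast
  then obtain q where q: "a = p @ q" "D \<noteq> {}" "D \<subseteq> rel_range rg sc lab A q"
    using y(2) by (auto simp: sle_Some_iff)
  moreover have "rel_range rg sc lab A q = rel_range rg sc lab X q \<union> rel_range rg sc lab Y q"
    using assms(1) rel_range_Un by metis
  ultimately obtain d where d: "d \<in> D" "d \<in> rel_range rg sc lab X q \<union> rel_range rg sc lab Y q"
    by blast
  have "smult rg sc lab (mk_triple p Z p) y \<noteq> None" if "d \<in> rel_range rg sc lab Z q" for Z
  proof -
    have "Z \<noteq> {}" using that by auto
    then show ?thesis
      using smult_Some_append_nonzero[OF that d(1)] by (simp add: mk_triple_def yD q(1))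
  qed
  then show "\<exists>z\<in>{mk_triple p X p, mk_triple p Y p}. smult rg sc lab z y \<noteq> None"
    using d(2) by blast
qed

lemma filter_slice_upward:
  assumes fil: "is_filter (ES rg sc lab B) (sle rg sc lab) None \<xi>"
    and "A \<in> filter_slice B \<xi> p" "C \<in> Bsub rg sc lab B p" "A \<subseteq> C"
  shows "C \<in> filter_slice B \<xi> p"
proof -
  have A: "Some (p, A, p) \<in> \<xi>" using assms(2) by (simp add: filter_slice_def)
  then have "p \<in> Lstar rg sc lab" "A \<noteq> {}"
    using is_filterD(1)[OF fil] by (auto simp: Some_in_ES_iff)
  then have "Some (p, C, p) \<in> ES rg sc lab B"
    and "sle rg sc lab (Some (p, A, p)) (Some (p, C, p))"
    using assms(3,4) by (auto simp: Some_in_ES_iff sle_Some_iff)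
  then have "Some (p, C, p) \<in> \<xi>" by (rule is_filterD(3)[OF fil A])
  then show ?thesis using Bsub_imp_B[OF assms(3)] by (simp add: filter_slice_def)
qed

lemma filter_slice_meet:
  assumes acc: "accommodating rg sc lab B"
    and wlr: "weakly_left_resolving rg sc lab B"
    and fil: "is_filter (ES rg sc lab B) (sle rg sc lab) None \<xi>"
    and AF: "A \<in> filter_slice B \<xi> p" "A' \<in> filter_slice B \<xi> p"
  shows "A \<inter> A' \<in> filter_slice B \<xi> p"
proof -
  let ?r = "rel_range rg sc lab"
  have A: "Some (p, A, p) \<in> \<xi>" "Some (p, A', p) \<in> \<xi>" "A \<in> B" "A' \<in> B"
    using AF by (auto simp: filter_slice_def)
  then have p: "p \<in> Lstar rg sc lab" and AP: "A \<in> Bsub rg sc lab B p"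
    using is_filterD(1)[OF fil] by (auto simp: Some_in_ES_iff)
  have AA'B: "A \<inter> A' \<in> B" using acc A(3,4) by (simp add: accommodating_def)
  obtain z where z: "z \<in> \<xi>" "sle rg sc lab z (Some (p, A, p))" "sle rg sc lab z (Some (p, A', p))"
    using is_filterD(4)[OF fil A(1,2)] by blast
  obtain a D where zD: "z = Some (a, D, a)"
    using ES_cases is_filterD(1,2)[OF fil] z(1) by blast
  obtain q where q: "a = p @ q" "D \<noteq> {}" "D \<subseteq> ?r A q" "D \<subseteq> ?r A' q"
    using z(2,3) unfolding zD sle_Some_iff by auto
  have "?r A q \<inter> ?r A' q = ?r (A \<inter> A') q"
  proof (cases "q = []")
    case False
    have "?r A q \<noteq> {}" using q(2,3) by blast
    then have "q \<in> Lplus rg sc lab" using False by (rule rel_range_nonempty_imp_Lplus)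
    then show ?thesis using wlr A(3,4) by (simp add: weakly_left_resolving_def)
  qed simp
  then have D: "D \<subseteq> ?r (A \<inter> A') q" using q(3,4) by blast
  then have "A \<inter> A' \<noteq> {}" using q(2) by auto
  moreover have "A \<inter> A' \<in> Bsub rg sc lab B p"
    using Bsub_downward_closed[OF AP AA'B] by blast
  ultimately have "Some (p, A \<inter> A', p) \<in> ES rg sc lab B"
    using p by (simp add: Some_in_ES_iff)
  moreover have "sle rg sc lab z (Some (p, A \<inter> A', p))"
    using zD q(1,2) D by (simp add: sle_Some_iff)
  ultimately have "Some (p, A \<inter> A', p) \<in> \<xi>" by (rule is_filterD(3)[OF fil z(1)])
  then show ?thesis using AA'B by (simp add: filter_slice_def)
qed

lemma filter_slice_is_filter:
  assumes acc: "accommodating rg sc lab B"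
    and wlr: "weakly_left_resolving rg sc lab B"
    and fil: "is_filter (ES rg sc lab B) (sle rg sc lab) None \<xi>"
    and ne: "filter_slice B \<xi> p \<noteq> {}"
  shows "is_filter (Bsub rg sc lab B p) (\<subseteq>) {} (filter_slice B \<xi> p)"
  unfolding is_filter_def
proof (intro conjI ballI impI)
  have "A \<in> Bsub rg sc lab B p \<and> A \<noteq> {}" if "A \<in> filter_slice B \<xi> p" for A
  proof -
    have "Some (p, A, p) \<in> ES rg sc lab B"
      using that is_filterD(1)[OF fil] unfolding filter_slice_def by blast
    then show ?thesis by (simp add: Some_in_ES_iff)
  qed
  then show "filter_slice B \<xi> p \<subseteq> Bsub rg sc lab B p" "{} \<notin> filter_slice B \<xi> p"
    by blast+
  show "filter_slice B \<xi> p \<noteq> {}" by (fact ne)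
  show "C \<in> filter_slice B \<xi> p"
    if "A \<in> filter_slice B \<xi> p" "C \<in> Bsub rg sc lab B p" "A \<subseteq> C" for A C
    using filter_slice_upward[OF fil that] .
  show "\<exists>E\<in>filter_slice B \<xi> p. E \<subseteq> A \<and> E \<subseteq> A'"
    if "A \<in> filter_slice B \<xi> p" "A' \<in> filter_slice B \<xi> p" for A A'
    using filter_slice_meet[OF acc wlr fil that] by (intro bexI[of _ "A \<inter> A'"]) auto
qed

lemma tight_filter_slice_maximal:
  assumes acc: "accommodating rg sc lab B"
    and crc: "closed_rel_compl B"
    and tf: "is_tight_filter rg sc lab B \<xi>"
    and A: "A \<in> filter_slice B \<xi> p"
    and G: "is_filter (Bsub rg sc lab B p) (\<subseteq>) {} G" "filter_slice B \<xi> p \<subseteq> G"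
    and C: "C \<in> G"
  shows "C \<in> filter_slice B \<xi> p"
proof -
  let ?F = "filter_slice B \<xi> p"
  have fil: "is_filter (ES rg sc lab B) (sle rg sc lab) None \<xi>"
    and tight: "\<And>x Z. x \<in> \<xi> \<Longrightarrow> finite Z \<Longrightarrow> is_cover rg sc lab B x Z \<Longrightarrow> Z \<inter> \<xi> \<noteq> {}"
    using tf by (auto simp: is_tight_filter_def)
  have A\<xi>: "Some (p, A, p) \<in> \<xi>" and AB: "A \<in> B" using A by (auto simp: filter_slice_def)
  then have Ap: "p \<in> Lstar rg sc lab" "A \<in> Bsub rg sc lab B p"
    using is_filterD(1)[OF fil] by (auto simp: Some_in_ES_iff)
  have CP: "C \<in> Bsub rg sc lab B p" using is_filterD(1)[OF G(1)] C by blast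
  then have CB: "C \<in> B" by (rule Bsub_imp_B)
  have AC: "A \<inter> C \<in> B" "A - C \<in> B"
    using acc crc AB CB by (auto simp: accommodating_def closed_rel_compl_def)
  have cover: "is_cover rg sc lab B (Some (p, A, p)) {mk_triple p (A \<inter> C) p, mk_triple p (A - C) p}"
    by (rule is_cover_split[OF _ AC Ap(2,1)]) blast
  have "{mk_triple p (A \<inter> C) p, mk_triple p (A - C) p} \<inter> \<xi> \<noteq> {}"
    by (rule tight[OF A\<xi> _ cover]) simp
  then have "Some (p, A \<inter> C, p) \<in> \<xi> \<or> Some (p, A - C, p) \<in> \<xi>"
    using is_filterD(2)[OF fil] by (auto simp: mk_triple_def split: if_splits)
  moreover have "Some (p, A - C, p) \<notin> \<xi>"
  proof
    assume "Some (p, A - C, p) \<in> \<xi>"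
    then have "A - C \<in> G" using G(2) AC by (auto simp: filter_slice_def)
    then obtain E where "E \<in> G" "E \<subseteq> A - C" "E \<subseteq> C"
      using is_filterD(4)[OF G(1) _ C] by blast
    then show False using is_filterD(2)[OF G(1)] by (metis Diff_disjoint subset_empty le_inf_iff)
  qed
  ultimately have "A \<inter> C \<in> ?F" using AC by (auto simp: filter_slice_def)
  then show ?thesis
    using filter_slice_upward[OF fil _ CP] by blast
qed

lemma tight_filter_slice_is_ultrafilter:
  assumes "accommodating rg sc lab B" "weakly_left_resolving rg sc lab B" "closed_rel_compl B"
    and tf: "is_tight_filter rg sc lab B \<xi>"
    and ne: "filter_slice B \<xi> p \<noteq> {}"
  shows "is_ultrafilter (Bsub rg sc lab B p) (\<subseteq>) {} (filter_slice B \<xi> p)"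
proof -
  obtain A where A: "A \<in> filter_slice B \<xi> p" using ne by blast
  have "is_filter (ES rg sc lab B) (sle rg sc lab) None \<xi>"
    using tf by (simp add: is_tight_filter_def)
  then show ?thesis
    unfolding is_ultrafilter_def
    using filter_slice_is_filter[OF assms(1,2) _ ne] tight_filter_slice_maximal[OF assms(1,3) tf A]
    by blast
qed

lemma filter_slice_prefix:
  assumes acc: "accommodating rg sc lab B"
    and fil: "is_filter (ES rg sc lab B) (sle rg sc lab) None \<xi>"
    and x: "Some (p @ q, A, p @ q) \<in> \<xi>" and p: "p \<noteq> []"
  shows "rel_range rg sc lab UNIV p \<in> filter_slice B \<xi> p"
proof -
  let ?r = "rel_range rg sc lab"
  have A: "p @ q \<in> Lstar rg sc lab" "A \<noteq> {}" "A \<in> Bsub rg sc lab B (p @ q)"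
    using x is_filterD(1)[OF fil] by (auto simp: Some_in_ES_iff)
  have pL: "p \<in> Lplus rg sc lab"
    using A(1) p Lplus_prefix by (auto simp: Lstar_def)
  have "A \<subseteq> ?r UNIV (p @ q)" using A(3) p by (simp add: Bsub_def)
  also have "\<dots> \<subseteq> ?r (?r UNIV p) q" using rel_range_append_subset[OF p] .
  finally have below: "A \<subseteq> ?r (?r UNIV p) q" .
  have rB: "?r UNIV p \<in> B" using acc pL by (simp add: accommodating_def)
  have "Some (p, ?r UNIV p, p) \<in> ES rg sc lab B"
    using pL rB below A(2) p by (auto simp: Some_in_ES_iff Lstar_def Bsub_def)
  moreover have "sle rg sc lab (Some (p @ q, A, p @ q)) (Some (p, ?r UNIV p, p))"
    using below A(2) by (simp add: sle_Some_iff)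
  ultimately have "Some (p, ?r UNIV p, p) \<in> \<xi>" by (rule is_filterD(3)[OF fil x])
  then show ?thesis using rB by (simp add: filter_slice_def)
qed

text \<open>If the word of \<xi> is infinite, no bound on the lengths of words in \<xi> exists,
  for otherwise the longest of them would be the word of \<xi>.\<close>

lemma word_of_InfW_unbounded:
  assumes w: "word_of rg sc lab \<xi> (InfW \<alpha>)" and ne: "\<xi> \<noteq> {}"
  shows "\<exists>m A. n \<le> m \<and> Some (map \<alpha> [0..<m], A, map \<alpha> [0..<m]) \<in> \<xi>"
proof (rule ccontr)
  assume bounded: "\<not> ?thesis"
  have no_longest: "\<nexists>\<beta>. has_longest_word \<xi> \<beta>"
    and prefixes: "\<forall>x\<in>\<xi>. \<exists>m A. x = Some (map \<alpha> [0..<m], A, map \<alpha> [0..<m])"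
    using w by (auto simp: word_of_def)
  define M where "M = {m. \<exists>A. Some (map \<alpha> [0..<m], A, map \<alpha> [0..<m]) \<in> \<xi>}"
  have "M \<subseteq> {..<n}" using bounded by (auto simp: M_def not_le)
  then have M: "finite M" "M \<noteq> {}"
    using ne prefixes finite_subset by (fastforce simp: M_def)+
  have "has_longest_word \<xi> (map \<alpha> [0..<Max M])"
    unfolding has_longest_word_def
  proof (intro conjI allI impI)
    show "\<exists>A. Some (map \<alpha> [0..<Max M], A, map \<alpha> [0..<Max M]) \<in> \<xi>"
      using Max_in[OF M] by (simp add: M_def)
    fix \<gamma> A \<delta> assume "Some (\<gamma>, A, \<delta>) \<in> \<xi>"
    then obtain k where "\<gamma> = map \<alpha> [0..<k]" "k \<in> M"
      using prefixes by (force simp: M_def)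
    then show "length \<gamma> \<le> length (map \<alpha> [0..<Max M])" using M(1) by simp
  qed
  then show False using no_longest by blast
qed

lemma word_of_prefix_extends:
  assumes w: "word_of rg sc lab \<xi> w" and ne: "\<xi> \<noteq> {}"
  shows "\<exists>q A. Some (wpref w n @ q, A, wpref w n @ q) \<in> \<xi>"
proof (cases w)
  case (FinW \<beta>)
  then obtain A where "Some (\<beta>, A, \<beta>) \<in> \<xi>"
    using w by (auto simp: word_of_def has_longest_word_def)
  then show ?thesis using FinW by (metis append_take_drop_id wpref.simps(1))
next
  case (InfW \<alpha>)
  then obtain m A where m: "n \<le> m" "Some (map \<alpha> [0..<m], A, map \<alpha> [0..<m]) \<in> \<xi>"
    using word_of_InfW_unbounded w ne by blast
  have "map \<alpha> [0..<m] = map \<alpha> [0..<n] @ map \<alpha> [n..<m]"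
    using m(1) by (metis map_append le_add_diff_inverse upt_add_eq_append zero_le)
  then show ?thesis using InfW m(2) by (metis wpref.simps(2))
qed

theorem mainTheorem15:
  fixes rg sc :: "'e \<Rightarrow> 'v" and lab :: "'e \<Rightarrow> 'a" and B :: "'v set set"
    and \<xi> :: "('a, 'v) selem set" and w :: "'a word"
  assumes "countable (UNIV :: 'v set)" and "countable (UNIV :: 'e set)"
    and "accommodating rg sc lab B"
    and "weakly_left_resolving rg sc lab B"
    and "closed_rel_compl B"
    and "is_tight_filter rg sc lab B \<xi>"
    and "word_of rg sc lab \<xi> w"
  shows "(\<forall>n::nat. 0 < n \<and> enat n \<le> wlen w \<longrightarrow>
            is_ultrafilter (Bsub rg sc lab B (wpref w n)) (\<subseteq>) {} (xi_n B \<xi> w n))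
       \<and> (xi_n B \<xi> w 0 = {} \<or> is_ultrafilter B (\<subseteq>) {} (xi_n B \<xi> w 0))"
proof (intro conjI allI impI)
  note ultra = tight_filter_slice_is_ultrafilter[OF assms(3-6)]
  have fil: "is_filter (ES rg sc lab B) (sle rg sc lab) None \<xi>"
    using assms(6) by (simp add: is_tight_filter_def)
  have "wpref w 0 = []" by (cases w) auto
  then show "xi_n B \<xi> w 0 = {} \<or> is_ultrafilter B (\<subseteq>) {} (xi_n B \<xi> w 0)"
    using ultra[of "[]"] by (auto simp: xi_n_eq_filter_slice Bsub_def)
  fix n :: nat assume n: "0 < n \<and> enat n \<le> wlen w"
  have "\<xi> \<noteq> {}" using fil by (simp add: is_filter_def)
  then obtain q A where "Some (wpref w n @ q, A, wpref w n @ q) \<in> \<xi>"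
    using word_of_prefix_extends[OF assms(7)] by blast
  moreover have "wpref w n \<noteq> []"
    using n by (cases w) (auto simp: enat_ord_simps)
  ultimately have "filter_slice B \<xi> (wpref w n) \<noteq> {}"
    using filter_slice_prefix[OF assms(3) fil] by blast
  then show "is_ultrafilter (Bsub rg sc lab B (wpref w n)) (\<subseteq>) {} (xi_n B \<xi> w n)"
    using ultra by (simp add: xi_n_eq_filter_slice)
qed

end
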